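(* Consider an episodic RMDP with $\mathcal{S}\times\mathcal{A}$-rectangular total-variation robust sets of radius $\rho\in[0,1)$ satisfying the vanishing minimal value assumption. Let $\pi$ be any deterministic Markov policy, and define $\widetilde T_h(\cdot|s,a)\in\arg\min_{P\in\mathcal{P}_\rho(s,a;P^\star_h)}\mathbb{E}_{P}[V^\pi_{h+1,P^\star,\boldsymbol{\Phi}}]$ for all $(s,a,h)$, $\widetilde T=\{\widetilde T_h\}_{h=1}^H$. Then $$\mathbb{E}_{(s_h,a_h)\sim(\widetilde T,\pi)}\Big[\sum_{h=1}^H\mathbb{V}_{\widetilde T_h(\cdot|s_h,a_h)}\big[V^\pi_{h+1,P^\star,\boldsymbol{\Phi}}\big]\Big]\le2H\cdot\min\{H,\rho^{-1}\},$$ where the expectation is over trajectories starting from the initial state $s_1$ and generated by $\pi$ under the kernels $\widetilde T$.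
   Context: Episodic RMDP $(\mathcal{S},\mathcal{A},H,P^\star,R,\boldsymbol{\Phi})$: finite $\mathcal{S},\mathcal{A}$, nominal kernels $P^\star_h$, rewards $R_h\in[0,1]$, fixed initial state $s_1$. TV robust set $\boldsymbol{\Phi}(P_h)=\bigotimes_{(s,a)}\mathcal{P}_\rho(s,a;P_h)$, $\mathcal{P}_\rho(s,a;P_h)=\{\widetilde P\in\Delta(\mathcal{S}):\frac12\sum_{s'}|\widetilde P(s')-P_h(s'|s,a)|\le\rho\}$. $V^\pi_{h,P^\star,\boldsymbol{\Phi}}(s)$ is the infimum over all $\widetilde P_i(\cdot|s',a')\in\mathcal{P}_\rho(s',a';P^\star_i)$ of the expected $\sum_{i=h}^HR_i(s_i,a_i)$ under $\pi$ from $s_h=s$; $V_{H+1}\equiv0$; $V^\star=\max_\pi V^\pi$. Vanishing minimal value assumption: $\min_sV^\star_{1,P^\star,\boldsymbol{\Phi}}(s)=0$ and $s_1\notin\arg\min_sV^\star_{1,P^\star,\boldsymbol{\Phi}}(s)$. $\mathbb{V}_p[f]=\mathbb{E}_p[f^2]-(\mathbb{E}_p[f])^2$. $\rho^{-1}=\infty$ if $\rho=0$. *)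

theory Defs
  imports Complex_Main
begin

text \<open>Steps are indexed h = 1..H.  Kernels are functions
  P :: nat \<Rightarrow> 's \<Rightarrow> 'a \<Rightarrow> 's \<Rightarrow> real, P h s a s' = P_h(s'|s,a).\<close>

definition simplex :: "('s::finite \<Rightarrow> real) set" where
  "simplex = {q. (\<forall>s. 0 \<le> q s) \<and> (\<Sum>s\<in>UNIV. q s) = 1}"

definition tv_ball :: "real \<Rightarrow> ('s::finite \<Rightarrow> real) \<Rightarrow> ('s \<Rightarrow> real) set" where
  "tv_ball \<rho> p = {q. q \<in> simplex \<and> (1/2) * (\<Sum>s\<in>UNIV. \<bar>q s - p s\<bar>) \<le> \<rho>}"

text \<open>Expected cumulative reward of policy pol under kernels Pt, from step h
  with n remaining steps (backward recursion = expectation of sum of rewards).\<close>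
fun pol_val_aux :: "(nat \<Rightarrow> 's::finite \<Rightarrow> 'a \<Rightarrow> real) \<Rightarrow> (nat \<Rightarrow> 's \<Rightarrow> 'a \<Rightarrow> 's \<Rightarrow> real)
    \<Rightarrow> (nat \<Rightarrow> 's \<Rightarrow> 'a) \<Rightarrow> nat \<Rightarrow> nat \<Rightarrow> 's \<Rightarrow> real" where
  "pol_val_aux R Pt pol 0 h s = 0"
| "pol_val_aux R Pt pol (Suc n) h s =
     R h s (pol h s) + (\<Sum>s'\<in>UNIV. Pt h s (pol h s) s' * pol_val_aux R Pt pol n (Suc h) s')"

definition pol_val :: "nat \<Rightarrow> (nat \<Rightarrow> 's::finite \<Rightarrow> 'a \<Rightarrow> real) \<Rightarrow> (nat \<Rightarrow> 's \<Rightarrow> 'a \<Rightarrow> 's \<Rightarrow> real)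
    \<Rightarrow> (nat \<Rightarrow> 's \<Rightarrow> 'a) \<Rightarrow> nat \<Rightarrow> 's \<Rightarrow> real" where
  "pol_val H R Pt pol h s = pol_val_aux R Pt pol (Suc H - h) h s"

text \<open>Admissible adversarial kernels: Pt_i(.|s,a) in the TV ball around P_i(.|s,a)
  for every step i and every (s,a)  (S x A-rectangular set Phi).\<close>
definition adm_kernels :: "nat \<Rightarrow> real \<Rightarrow> (nat \<Rightarrow> 's::finite \<Rightarrow> 'a \<Rightarrow> 's \<Rightarrow> real)
    \<Rightarrow> (nat \<Rightarrow> 's \<Rightarrow> 'a \<Rightarrow> 's \<Rightarrow> real) set" where
  "adm_kernels H \<rho> P = {Pt. \<forall>i\<in>{1..H}. \<forall>s a. Pt i s a \<in> tv_ball \<rho> (P i s a)}"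

definition rob_val :: "nat \<Rightarrow> real \<Rightarrow> (nat \<Rightarrow> 's::finite \<Rightarrow> 'a \<Rightarrow> real) \<Rightarrow> (nat \<Rightarrow> 's \<Rightarrow> 'a \<Rightarrow> 's \<Rightarrow> real)
    \<Rightarrow> (nat \<Rightarrow> 's \<Rightarrow> 'a) \<Rightarrow> nat \<Rightarrow> 's \<Rightarrow> real" where
  "rob_val H \<rho> R P pol h s = (INF Pt\<in>adm_kernels H \<rho> P. pol_val H R Pt pol h s)"

definition opt_rob_val :: "nat \<Rightarrow> real \<Rightarrow> (nat \<Rightarrow> 's::finite \<Rightarrow> 'a::finite \<Rightarrow> real)
    \<Rightarrow> (nat \<Rightarrow> 's \<Rightarrow> 'a \<Rightarrow> 's \<Rightarrow> real) \<Rightarrow> nat \<Rightarrow> 's \<Rightarrow> real" where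
  "opt_rob_val H \<rho> R P h s = (SUP pol. rob_val H \<rho> R P pol h s)"

definition var_p :: "('s::finite \<Rightarrow> real) \<Rightarrow> ('s \<Rightarrow> real) \<Rightarrow> real" where
  "var_p p f = (\<Sum>s\<in>UNIV. p s * (f s)^2) - (\<Sum>s\<in>UNIV. p s * f s)^2"

text \<open>State-occupancy distribution under (T, pol) from s1:
  occ T pol s1 k s = Pr(s_{k+1} = s).\<close>
fun occ :: "(nat \<Rightarrow> 's::finite \<Rightarrow> 'a \<Rightarrow> 's \<Rightarrow> real) \<Rightarrow> (nat \<Rightarrow> 's \<Rightarrow> 'a) \<Rightarrow> 's \<Rightarrow> nat \<Rightarrow> 's \<Rightarrow> real" where
  "occ T pol s1 0 s = (if s = s1 then 1 else 0)"
| "occ T pol s1 (Suc k) s' = (\<Sum>s\<in>UNIV. occ T pol s1 k s * T (Suc k) s (pol (Suc k) s) s')"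

text \<open>min{H, rho^{-1}} with rho^{-1} = infinity for rho = 0.\<close>
definition min_H_inv :: "nat \<Rightarrow> real \<Rightarrow> real" where
  "min_H_inv H \<rho> = (if \<rho> = 0 then real H else min (real H) (1 / \<rho>))"

end

theory Submission
  imports Defs
begin

text \<open>Since \<open>T\<close> attains the inner minimum at every step, the robust value \<open>V h\<close> of the
  policy satisfies the Bellman equation \<open>V h = R h + T h (V (h+1))\<close> with \<open>V (H+1) = 0\<close>.
  The vanishing minimal value gives a state where \<open>V 1\<close> vanishes, and following the support of
  \<open>T\<close> every \<open>V h\<close> has a zero.  Moving mass \<open>\<rho>\<close> of \<open>P h\<close> onto such a zero stays in the
  TV ball, so \<open>V h \<le> 1 + (1 - \<rho>) / \<rho> = 1 / \<rho>\<close>; hence \<open>V h \<le> M = min H (1 / \<rho>)\<close>.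
  As \<open>0 \<le> R h \<le> 1\<close>, the variance of \<open>V (h+1)\<close> under \<open>T h\<close> is at most
  \<open>T h (V (h+1)\<^sup>2) - (V h)\<^sup>2 + 2 M\<close>, and averaged over the occupancy measure of \<open>T\<close> and the
  policy these bounds telescope to \<open>2 H M\<close>.\<close>

lemma simplex_nonneg: "q \<in> simplex \<Longrightarrow> 0 \<le> q s"
  by (simp add: simplex_def)

lemma simplex_sum: "q \<in> simplex \<Longrightarrow> sum q UNIV = 1"
  by (simp add: simplex_def)

lemma simplex_expectation_le:
  assumes "q \<in> simplex" "\<And>s. f s \<le> b"
  shows "(\<Sum>s\<in>UNIV. q s * f s) \<le> b"
proof -
  have "(\<Sum>s\<in>UNIV. q s * f s) \<le> (\<Sum>s\<in>UNIV. q s * b)"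
    using assms by (intro sum_mono mult_left_mono) (auto simp: simplex_nonneg)
  also have "\<dots> = b"
    using simplex_sum[OF assms(1)] by (simp add: sum_distrib_right[symmetric])
  finally show ?thesis .
qed

lemma simplex_expectation_ge:
  assumes "q \<in> simplex" "\<And>s. a \<le> f s"
  shows "a \<le> (\<Sum>s\<in>UNIV. q s * f s)"
proof -
  have "a = (\<Sum>s\<in>UNIV. q s * a)"
    using simplex_sum[OF assms(1)] by (simp add: sum_distrib_right[symmetric])
  also have "\<dots> \<le> (\<Sum>s\<in>UNIV. q s * f s)"
    using assms by (intro sum_mono mult_left_mono) (auto simp: simplex_nonneg)
  finally show ?thesis .
qed

lemma simplex_expectation_eq_0_imp_zero:
  assumes "q \<in> simplex" "\<And>s. 0 \<le> f s" "(\<Sum>s\<in>UNIV. q s * f s) = 0"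
  shows "\<exists>s. f s = 0"
proof -
  have "\<forall>s. q s * f s = 0"
    using assms sum_nonneg_eq_0_iff[of UNIV "\<lambda>s. q s * f s"] by (simp add: simplex_nonneg)
  moreover obtain s where "q s \<noteq> 0"
    using simplex_sum[OF assms(1)] by (metis sum.neutral zero_neq_one)
  ultimately show ?thesis by auto
qed

lemma mix_point_mass_in_tv_ball:
  assumes p: "p \<in> simplex" and \<rho>: "0 \<le> \<rho>" "\<rho> \<le> 1"
  shows "(\<lambda>s. (1 - \<rho>) * p s + (if s = z then \<rho> else 0)) \<in> tv_ball \<rho> p"
    (is "?q \<in> _")
proof -
  have q: "?q \<in> simplex"
    using p \<rho> by (auto simp: simplex_def sum.distrib sum_distrib_left[symmetric])
  have "\<bar>?q s - p s\<bar> \<le> \<rho> * ((if s = z then 1 else 0) + p s)" for s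
  proof -
    have "?q s - p s = \<rho> * ((if s = z then 1 else 0) - p s)"
      by (simp add: algebra_simps)
    then have "\<bar>?q s - p s\<bar> = \<rho> * \<bar>(if s = z then 1 else 0) - p s\<bar>"
      using \<rho> by (simp add: abs_mult)
    also have "\<dots> \<le> \<rho> * ((if s = z then 1 else 0) + p s)"
      using \<rho> simplex_nonneg[OF p, of s] by (intro mult_left_mono) auto
    finally show ?thesis .
  qed
  then have "(\<Sum>s\<in>UNIV. \<bar>?q s - p s\<bar>) \<le> (\<Sum>s\<in>UNIV. \<rho> * ((if s = z then 1 else 0) + p s))"
    by (rule sum_mono)
  also have "\<dots> = 2 * \<rho>"
    using simplex_sum[OF p] by (simp add: sum.distrib sum_distrib_left[symmetric])
  finally show ?thesis
    using q by (simp add: tv_ball_def)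
qed

lemma var_p_le_second_moment_diff:
  assumes "(\<Sum>s\<in>UNIV. q s * f s) = v - r" "r \<le> 1" "0 \<le> v"
  shows "var_p q f \<le> (\<Sum>s\<in>UNIV. q s * (f s)\<^sup>2) - v\<^sup>2 + 2 * v"
proof -
  have "r * v \<le> v"
    using mult_right_mono[OF assms(2,3)] by simp
  moreover have "(v - r)\<^sup>2 = v\<^sup>2 - 2 * (r * v) + r\<^sup>2"
    by (simp add: power2_eq_square algebra_simps)
  ultimately have "v\<^sup>2 - 2 * v \<le> (v - r)\<^sup>2"
    using zero_le_power2[of r] by linarith
  then show ?thesis
    unfolding var_p_def assms(1) by linarith
qed

lemma pol_val_Suc:
  "h \<le> H \<Longrightarrow> pol_val H R Pt pol h s =
     R h s (pol h s) + (\<Sum>s'\<in>UNIV. Pt h s (pol h s) s' * pol_val H R Pt pol (Suc h) s')"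
  unfolding pol_val_def by (simp add: Suc_diff_le)

lemma pol_val_beyond: "pol_val H R Pt pol (Suc H) s = 0"
  by (simp add: pol_val_def)

lemma pol_val_aux_bounds:
  assumes "\<And>i s a. h \<le> i \<Longrightarrow> i < h + n \<Longrightarrow>
      Pt i s a \<in> simplex \<and> 0 \<le> R i s a \<and> R i s a \<le> 1"
  shows "0 \<le> pol_val_aux R Pt pol n h s \<and> pol_val_aux R Pt pol n h s \<le> real n"
  using assms
proof (induction n arbitrary: h s)
  case 0
  then show ?case by simp
next
  case (Suc n)
  have IH: "0 \<le> pol_val_aux R Pt pol n (Suc h) s' \<and> pol_val_aux R Pt pol n (Suc h) s' \<le> real n"
    for s'
    using Suc.prems by (intro Suc.IH) auto
  have Pt: "Pt h s (pol h s) \<in> simplex" and R: "0 \<le> R h s (pol h s)" "R h s (pol h s) \<le> 1"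
    using Suc.prems[of h] by auto
  have "0 \<le> (\<Sum>s'\<in>UNIV. Pt h s (pol h s) s' * pol_val_aux R Pt pol n (Suc h) s')"
    using IH by (intro simplex_expectation_ge[OF Pt]) blast
  moreover have "(\<Sum>s'\<in>UNIV. Pt h s (pol h s) s' * pol_val_aux R Pt pol n (Suc h) s') \<le> real n"
    using IH by (intro simplex_expectation_le[OF Pt]) blast
  ultimately show ?case
    using R by simp
qed

lemma pol_val_bounds:
  assumes "\<forall>i\<in>{1..H}. \<forall>s a. Pt i s a \<in> simplex"
    and "\<forall>i\<in>{1..H}. \<forall>s a. 0 \<le> R i s a \<and> R i s a \<le> 1" and "1 \<le> h"
  shows "0 \<le> pol_val H R Pt pol h s \<and> pol_val H R Pt pol h s \<le> real (Suc H - h)"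
  unfolding pol_val_def by (rule pol_val_aux_bounds) (use assms in auto)

lemma adm_kernels_simplex: "Pt \<in> adm_kernels H \<rho> P \<Longrightarrow> \<forall>i\<in>{1..H}. \<forall>s a. Pt i s a \<in> simplex"
  by (auto simp: adm_kernels_def tv_ball_def)

lemma occ_Suc_expectation:
  "(\<Sum>s'\<in>UNIV. occ T pol s1 (Suc k) s' * f s') =
     (\<Sum>s\<in>UNIV. occ T pol s1 k s * (\<Sum>s'\<in>UNIV. T (Suc k) s (pol (Suc k) s) s' * f s'))"
proof -
  have "(\<Sum>s'\<in>UNIV. occ T pol s1 (Suc k) s' * f s') =
      (\<Sum>s'\<in>UNIV. \<Sum>s\<in>UNIV. occ T pol s1 k s * T (Suc k) s (pol (Suc k) s) s' * f s')"
    by (simp add: sum_distrib_right)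
  also have "\<dots> = (\<Sum>s\<in>UNIV. \<Sum>s'\<in>UNIV. occ T pol s1 k s * T (Suc k) s (pol (Suc k) s) s' * f s')"
    by (rule sum.swap)
  finally show ?thesis
    by (simp add: sum_distrib_left mult.assoc)
qed

lemma occ_simplex:
  assumes "\<forall>i\<in>{1..H}. \<forall>s a. T i s a \<in> simplex" "k \<le> H"
  shows "occ T pol s1 k \<in> simplex"
  using assms(2)
proof (induction k)
  case 0
  show ?case by (simp add: simplex_def)
next
  case (Suc k)
  have T: "T (Suc k) s a \<in> simplex" for s a
    using assms(1) Suc.prems by auto
  have nonneg: "0 \<le> occ T pol s1 (Suc k) s'" for s'
    using Suc simplex_nonneg[OF T] by (auto intro!: sum_nonneg simp: simplex_nonneg)
  have "sum (occ T pol s1 (Suc k)) UNIV =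
      (\<Sum>s\<in>UNIV. occ T pol s1 k s * sum (T (Suc k) s (pol (Suc k) s)) UNIV)"
    using occ_Suc_expectation[of T pol s1 k "\<lambda>_. 1"] by simp
  also have "\<dots> = 1"
    using Suc simplex_sum[OF T] by (simp add: simplex_sum)
  finally show ?case
    using nonneg by (simp add: simplex_def)
qed

locale tv_rmdp =
  fixes H :: nat and \<rho> :: real
    and P :: "nat \<Rightarrow> 's::finite \<Rightarrow> 'a::finite \<Rightarrow> 's \<Rightarrow> real"
    and R :: "nat \<Rightarrow> 's \<Rightarrow> 'a \<Rightarrow> real"
  assumes radius_nonneg: "0 \<le> \<rho>"
    and P_simplex: "\<forall>h\<in>{1..H}. \<forall>s a. P h s a \<in> simplex"
    and R_unit: "\<forall>h\<in>{1..H}. \<forall>s a. 0 \<le> R h s a \<and> R h s a \<le> 1"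
begin

lemma nominal_adm: "P \<in> adm_kernels H \<rho> P"
  using P_simplex radius_nonneg by (auto simp: adm_kernels_def tv_ball_def)

lemma rob_val_le_pol_val:
  assumes "1 \<le> h" "Pt \<in> adm_kernels H \<rho> P"
  shows "rob_val H \<rho> R P pol h s \<le> pol_val H R Pt pol h s"
  unfolding rob_val_def
proof (rule cINF_lower[OF _ assms(2)])
  show "bdd_below ((\<lambda>Pt. pol_val H R Pt pol h s) ` adm_kernels H \<rho> P)"
    by (rule bdd_belowI2[where m = 0])
      (use pol_val_bounds[OF adm_kernels_simplex R_unit assms(1)] in blast)
qed

lemma rob_val_greatest:
  "(\<And>Pt. Pt \<in> adm_kernels H \<rho> P \<Longrightarrow> c \<le> pol_val H R Pt pol h s) \<Longrightarrow> c \<le> rob_val H \<rho> R P pol h s"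
  unfolding rob_val_def using nominal_adm by (intro cINF_greatest) auto

lemma rob_val_nonneg: "1 \<le> h \<Longrightarrow> 0 \<le> rob_val H \<rho> R P pol h s"
  using pol_val_bounds[OF adm_kernels_simplex R_unit] by (intro rob_val_greatest) blast

lemma rob_val_le_horizon: "1 \<le> h \<Longrightarrow> rob_val H \<rho> R P pol h s \<le> real (Suc H - h)"
  using rob_val_le_pol_val[OF _ nominal_adm, of h pol s] pol_val_bounds[OF P_simplex R_unit, of h pol s]
  by linarith

lemma rob_val_le_opt_rob_val: "1 \<le> h \<Longrightarrow> rob_val H \<rho> R P pol h s \<le> opt_rob_val H \<rho> R P h s"
  unfolding opt_rob_val_def
  by (rule cSUP_upper) (auto intro!: bdd_aboveI2[where M = "real H"] order_trans[OF rob_val_le_horizon])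

end

locale tv_rmdp_worst_case = tv_rmdp H \<rho> P R
  for H :: nat and \<rho> :: real
    and P :: "nat \<Rightarrow> 's::finite \<Rightarrow> 'a::finite \<Rightarrow> 's \<Rightarrow> real"
    and R :: "nat \<Rightarrow> 's \<Rightarrow> 'a \<Rightarrow> real" +
  fixes pol :: "nat \<Rightarrow> 's \<Rightarrow> 'a"
    and T :: "nat \<Rightarrow> 's \<Rightarrow> 'a \<Rightarrow> 's \<Rightarrow> real"
  assumes T_worst_case: "\<forall>h\<in>{1..H}. \<forall>s a. T h s a \<in> tv_ball \<rho> (P h s a) \<and>
         (\<forall>q\<in>tv_ball \<rho> (P h s a).
            (\<Sum>s'\<in>UNIV. T h s a s' * rob_val H \<rho> R P pol (Suc h) s')
              \<le> (\<Sum>s'\<in>UNIV. q s' * rob_val H \<rho> R P pol (Suc h) s'))"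
begin

abbreviation V :: "nat \<Rightarrow> 's \<Rightarrow> real" where
  "V \<equiv> rob_val H \<rho> R P pol"

lemma T_expectation_le:
  "h \<in> {1..H} \<Longrightarrow> q \<in> tv_ball \<rho> (P h s a) \<Longrightarrow>
     (\<Sum>s'\<in>UNIV. T h s a s' * V (Suc h) s') \<le> (\<Sum>s'\<in>UNIV. q s' * V (Suc h) s')"
  using T_worst_case by blast

lemma T_adm: "T \<in> adm_kernels H \<rho> P"
  using T_worst_case by (auto simp: adm_kernels_def)

lemma T_simplex: "h \<in> {1..H} \<Longrightarrow> T h s a \<in> simplex"
  using adm_kernels_simplex[OF T_adm] by blast

lemma V_beyond: "V (Suc H) s = 0"
  using rob_val_nonneg[of "Suc H"] rob_val_le_horizon[of "Suc H"] by (simp add: order_antisym)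

lemma V_eq_pol_val_step:
  assumes h: "h \<in> {1..H}" and IH: "\<And>s'. V (Suc h) s' = pol_val H R T pol (Suc h) s'"
  shows "V h s = pol_val H R T pol h s"
proof (rule order_antisym)
  show "V h s \<le> pol_val H R T pol h s"
    using h by (intro rob_val_le_pol_val T_adm) auto
  show "pol_val H R T pol h s \<le> V h s"
  proof (rule rob_val_greatest)
    fix Pt assume Pt: "Pt \<in> adm_kernels H \<rho> P"
    let ?q = "Pt h s (pol h s)"
    have ball: "?q \<in> tv_ball \<rho> (P h s (pol h s))"
      using Pt h by (auto simp: adm_kernels_def)
    have "(\<Sum>s'\<in>UNIV. T h s (pol h s) s' * V (Suc h) s') \<le> (\<Sum>s'\<in>UNIV. ?q s' * V (Suc h) s')"
      using T_expectation_le[OF h ball] .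
    also have "\<dots> \<le> (\<Sum>s'\<in>UNIV. ?q s' * pol_val H R Pt pol (Suc h) s')"
      using ball rob_val_le_pol_val[OF _ Pt]
      by (intro sum_mono mult_left_mono) (auto simp: tv_ball_def simplex_nonneg)
    finally show "pol_val H R T pol h s \<le> pol_val H R Pt pol h s"
      using h IH by (simp add: pol_val_Suc)
  qed
qed

lemma V_eq_pol_val:
  assumes "1 \<le> h" "h \<le> Suc H"
  shows "V h s = pol_val H R T pol h s"
proof -
  have "\<forall>s. V h s = pol_val H R T pol h s"
    using assms(2)
  proof (induction rule: inc_induct)
    case base
    show ?case by (simp add: V_beyond pol_val_beyond)
  next
    case (step n)
    then show ?case
      using assms(1) by (auto intro: V_eq_pol_val_step)
  qed
  then show ?thesis ..
qed

lemma V_Bellman: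
  "h \<in> {1..H} \<Longrightarrow> V h s = R h s (pol h s) + (\<Sum>s'\<in>UNIV. T h s (pol h s) s' * V (Suc h) s')"
  by (simp add: V_eq_pol_val pol_val_Suc)

lemma V_has_zero_Suc:
  assumes h: "h \<in> {1..H}" and z: "V h z = 0"
  shows "\<exists>z'. V (Suc h) z' = 0"
proof (rule simplex_expectation_eq_0_imp_zero)
  show "T h z (pol h z) \<in> simplex"
    using h by (rule T_simplex)
  show "0 \<le> V (Suc h) s'" for s'
    by (simp add: rob_val_nonneg)
  have "0 \<le> R h z (pol h z)"
    using R_unit h by auto
  moreover have "0 \<le> (\<Sum>s'\<in>UNIV. T h z (pol h z) s' * V (Suc h) s')"
    using h by (intro sum_nonneg mult_nonneg_nonneg simplex_nonneg T_simplex rob_val_nonneg) auto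
  ultimately show "(\<Sum>s'\<in>UNIV. T h z (pol h z) s' * V (Suc h) s') = 0"
    using V_Bellman[OF h, of z] z by linarith
qed

lemma V_has_zero:
  assumes "V 1 s0 = 0" "1 \<le> h" "h \<le> Suc H"
  shows "\<exists>z. V h z = 0"
  using assms(2,3)
proof (induction h rule: dec_induct)
  case base
  show ?case using assms(1) by blast
next
  case (step h)
  then show ?case using V_has_zero_Suc by auto
qed

lemma V_le_inverse_radius_step:
  assumes \<rho>: "0 < \<rho>" "\<rho> \<le> 1" and h: "h \<in> {1..H}"
    and z: "V (Suc h) z = 0" and IH: "\<And>s'. V (Suc h) s' \<le> 1 / \<rho>"
  shows "V h s \<le> 1 / \<rho>"
proof -
  define p where "p = P h s (pol h s)"
  define q where "q s' = (1 - \<rho>) * p s' + (if s' = z then \<rho> else 0)" for s'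
  have p: "p \<in> simplex"
    using P_simplex h by (simp add: p_def)
  have "q \<in> tv_ball \<rho> (P h s (pol h s))"
    unfolding q_def p_def[symmetric] using p \<rho> by (intro mix_point_mass_in_tv_ball) auto
  then have "(\<Sum>s'\<in>UNIV. T h s (pol h s) s' * V (Suc h) s') \<le> (\<Sum>s'\<in>UNIV. q s' * V (Suc h) s')"
    by (rule T_expectation_le[OF h])
  also have "\<dots> = (1 - \<rho>) * (\<Sum>s'\<in>UNIV. p s' * V (Suc h) s')"
  proof -
    have "q s' * V (Suc h) s' = (1 - \<rho>) * (p s' * V (Suc h) s')" for s'
      using z by (cases "s' = z") (simp_all add: q_def algebra_simps)
    then show ?thesis
      by (simp only: sum_distrib_left)
  qed
  also have "\<dots> \<le> (1 - \<rho>) * (1 / \<rho>)"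
    using \<rho> by (intro mult_left_mono simplex_expectation_le[OF p IH]) auto
  moreover have "R h s (pol h s) \<le> 1"
    using R_unit h by auto
  ultimately have "V h s \<le> 1 + (1 - \<rho>) * (1 / \<rho>)"
    using V_Bellman[OF h, of s] by linarith
  also have "\<dots> = 1 / \<rho>"
    using \<rho> by (simp add: field_simps)
  finally show ?thesis .
qed

lemma V_le_inverse_radius:
  assumes \<rho>: "0 < \<rho>" "\<rho> \<le> 1" and s0: "V 1 s0 = 0" and h: "1 \<le> h" "h \<le> Suc H"
  shows "V h s \<le> 1 / \<rho>"
proof -
  have "\<forall>s. V h s \<le> 1 / \<rho>"
    using h(2)
  proof (induction rule: inc_induct)
    case base
    show ?case using \<rho> by (simp add: V_beyond)
  next
    case (step n)
    obtain z where "V (Suc n) z = 0"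
      using V_has_zero[OF s0, of "Suc n"] step by auto
    with step h(1) show ?case
      by (auto intro: V_le_inverse_radius_step[OF \<rho>])
  qed
  then show ?thesis ..
qed

lemma V_le_min_H_inv:
  assumes "\<rho> \<le> 1" "V 1 s0 = 0" "h \<in> {1..H}"
  shows "V h s \<le> min_H_inv H \<rho>"
proof -
  have "V h s \<le> real (Suc H - h)"
    using assms(3) by (intro rob_val_le_horizon) simp
  also have "\<dots> \<le> real H"
    using assms(3) by simp
  finally have "V h s \<le> real H" .
  moreover have "V h s \<le> 1 / \<rho>" if "0 < \<rho>"
    using assms that by (intro V_le_inverse_radius) auto
  ultimately show ?thesis
    unfolding min_H_inv_def using radius_nonneg by auto
qed

lemma occupancy_variance_step:
  assumes h: "h \<in> {1..H}" and M: "\<And>s. V h s \<le> M"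
  shows "(\<Sum>s\<in>UNIV. occ T pol s1 (h - 1) s * var_p (T h s (pol h s)) (V (Suc h)))
      \<le> (\<Sum>s\<in>UNIV. occ T pol s1 h s * (V (Suc h) s)\<^sup>2)
         - (\<Sum>s\<in>UNIV. occ T pol s1 (h - 1) s * (V h s)\<^sup>2) + 2 * M"
proof -
  obtain j where j: "h = Suc j"
    using h by (cases h) auto
  let ?\<mu> = "occ T pol s1 j" and ?T = "\<lambda>s. T h s (pol h s)"
  have \<mu>: "?\<mu> \<in> simplex"
    using h j by (intro occ_simplex[OF adm_kernels_simplex[OF T_adm]]) auto
  have "var_p (?T s) (V (Suc h)) \<le>
      (\<Sum>s'\<in>UNIV. ?T s s' * (V (Suc h) s')\<^sup>2) - (V h s)\<^sup>2 + 2 * M" for s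
  proof -
    have mean: "(\<Sum>s'\<in>UNIV. ?T s s' * V (Suc h) s') = V h s - R h s (pol h s)"
      using V_Bellman[OF h, of s] by simp
    have "R h s (pol h s) \<le> 1" "0 \<le> V h s"
      using R_unit h by (auto simp: rob_val_nonneg)
    then have "var_p (?T s) (V (Suc h)) \<le>
        (\<Sum>s'\<in>UNIV. ?T s s' * (V (Suc h) s')\<^sup>2) - (V h s)\<^sup>2 + 2 * V h s"
      by (rule var_p_le_second_moment_diff[OF mean])
    then show ?thesis using M[of s] by linarith
  qed
  then have "(\<Sum>s\<in>UNIV. ?\<mu> s * var_p (?T s) (V (Suc h)))
      \<le> (\<Sum>s\<in>UNIV. ?\<mu> s * ((\<Sum>s'\<in>UNIV. ?T s s' * (V (Suc h) s')\<^sup>2) - (V h s)\<^sup>2 + 2 * M))"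
    by (intro sum_mono mult_left_mono) (auto simp: simplex_nonneg[OF \<mu>])
  also have "\<dots> = (\<Sum>s\<in>UNIV. ?\<mu> s * (\<Sum>s'\<in>UNIV. ?T s s' * (V (Suc h) s')\<^sup>2))
      - (\<Sum>s\<in>UNIV. ?\<mu> s * (V h s)\<^sup>2) + 2 * M * sum ?\<mu> UNIV"
    by (simp add: algebra_simps sum.distrib sum_subtractf sum_distrib_left)
  also have "(\<Sum>s\<in>UNIV. ?\<mu> s * (\<Sum>s'\<in>UNIV. ?T s s' * (V (Suc h) s')\<^sup>2))
      = (\<Sum>s\<in>UNIV. occ T pol s1 h s * (V (Suc h) s)\<^sup>2)"
    unfolding j by (rule occ_Suc_expectation[symmetric])
  finally show ?thesis
    using simplex_sum[OF \<mu>] j by simp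
qed

lemma total_variance_le:
  assumes M: "\<forall>h\<in>{1..H}. \<forall>s. V h s \<le> M"
  shows "(\<Sum>h=1..H. \<Sum>s\<in>UNIV. occ T pol s1 (h - 1) s * var_p (T h s (pol h s)) (V (Suc h)))
      \<le> 2 * real H * M"
proof -
  define a where "a h = (\<Sum>s\<in>UNIV. occ T pol s1 (h - 1) s * (V h s)\<^sup>2)" for h
  have "(\<Sum>h=1..H. \<Sum>s\<in>UNIV. occ T pol s1 (h - 1) s * var_p (T h s (pol h s)) (V (Suc h)))
      \<le> (\<Sum>h=1..H. a (Suc h) - a h + 2 * M)"
    unfolding a_def diff_Suc_1 by (rule sum_mono, rule occupancy_variance_step) (use M in auto)
  also have "\<dots> = a (Suc H) - a 1 + 2 * real H * M"
    by (simp add: sum.distrib sum_Suc_diff)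
  also have "a (Suc H) = 0"
    by (simp add: a_def V_beyond)
  also have "0 \<le> a 1"
    by (simp add: a_def sum_nonneg)
  finally show ?thesis by simp
qed

end

theorem lemma8:
  fixes H :: nat and \<rho> :: real
    and P :: "nat \<Rightarrow> 's::finite \<Rightarrow> 'a::finite \<Rightarrow> 's \<Rightarrow> real"
    and R :: "nat \<Rightarrow> 's \<Rightarrow> 'a \<Rightarrow> real"
    and s1 :: 's
    and pol :: "nat \<Rightarrow> 's \<Rightarrow> 'a"
    and T :: "nat \<Rightarrow> 's \<Rightarrow> 'a \<Rightarrow> 's \<Rightarrow> real"
  assumes rho: "0 \<le> \<rho>" "\<rho> < 1"
    and P_dist: "\<forall>h\<in>{1..H}. \<forall>s a. P h s a \<in> simplex"
    and R_bnd: "\<forall>h\<in>{1..H}. \<forall>s a. 0 \<le> R h s a \<and> R h s a \<le> 1"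
    and vanish: "(MIN s. opt_rob_val H \<rho> R P 1 s) = 0"
      "opt_rob_val H \<rho> R P 1 s1 \<noteq> (MIN s. opt_rob_val H \<rho> R P 1 s)"
    and T_argmin: "\<forall>h\<in>{1..H}. \<forall>s a. T h s a \<in> tv_ball \<rho> (P h s a) \<and>
         (\<forall>q\<in>tv_ball \<rho> (P h s a).
            (\<Sum>s'\<in>UNIV. T h s a s' * rob_val H \<rho> R P pol (Suc h) s')
              \<le> (\<Sum>s'\<in>UNIV. q s' * rob_val H \<rho> R P pol (Suc h) s'))"
  shows "(\<Sum>h=1..H. \<Sum>s\<in>UNIV. occ T pol s1 (h - 1) s *
            var_p (T h s (pol h s)) (rob_val H \<rho> R P pol (Suc h)))
         \<le> 2 * real H * min_H_inv H \<rho>"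
proof -
  interpret tv_rmdp_worst_case H \<rho> P R pol T
    using rho(1) P_dist R_bnd T_argmin by unfold_locales
  obtain s0 where "opt_rob_val H \<rho> R P 1 s0 = 0"
    using vanish(1) Min_in[of "range (opt_rob_val H \<rho> R P 1)"] by auto
  then have "V 1 s0 = 0"
    using rob_val_le_opt_rob_val[of 1] rob_val_nonneg[of 1] by (metis order_antisym order_refl)
  then have "\<forall>h\<in>{1..H}. \<forall>s. V h s \<le> min_H_inv H \<rho>"
    using rho(2) by (auto intro: V_le_min_H_inv)
  then show ?thesis
    by (rule total_variance_le)
qed

end
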